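(* Let $G$ be a graph with vertex set $V$ of order $n$ and let $k$ be an integer with $2(k-1)>n\ge 2$. Let $H$ be the graph with vertex set $V\cup V'\cup W$, where $V'=\{u':u\in V\}$ is a set of $n$ new vertices and $W$ is a set of $2(k-1)$ new vertices, whose edges are: all edges of $G$; the edges $uu'$ for $u\in V$; $k-1$ pairwise disjoint edges covering $W$ (so $H[W]\cong (k-1)K_2$); and all edges between $V$ and $W$ (no edges between $V'$ and $W$, and no further edges). Then $\alpha(H)=n+k-1$, $\mathrm{diss}(H)=n+2(k-1)$, $\nu_s(H)\ge k-1$, and $$\alpha(G)\ge k\iff \nu_s(H)\ge k \iff \mathrm{diss}(H)\ne \alpha(H)+\nu_s(H).$$
   Context: All graphs are finite, simple and undirected. A set $I$ of vertices of a graph $G$ is a dissociation set if the induced subgraph $G[I]$ has maximum degree at most $1$; $\mathrm{diss}(G)$ is the maximum order of a dissociation set in $G$. $\alpha(G)$ is the independence number. An induced matching is a matching $N$ such that the subgraph of $G$ induced by the vertices covered by $N$ has edge set exactly $N$; $\nu_s(G)$ is the maximum size of an induced matching in $G$. *)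

theory Defs
  imports Main
begin

definition simple_graph :: "'a set \<Rightarrow> ('a \<Rightarrow> 'a \<Rightarrow> bool) \<Rightarrow> bool" where
  "simple_graph V E \<longleftrightarrow> finite V \<and> (\<forall>x y. E x y \<longrightarrow> E y x) \<and> (\<forall>x. \<not> E x x)
     \<and> (\<forall>x y. E x y \<longrightarrow> x \<in> V \<and> y \<in> V)"

definition independent_set :: "'a set \<Rightarrow> ('a \<Rightarrow> 'a \<Rightarrow> bool) \<Rightarrow> 'a set \<Rightarrow> bool" where
  "independent_set V E I \<longleftrightarrow> I \<subseteq> V \<and> (\<forall>x\<in>I. \<forall>y\<in>I. \<not> E x y)"

definition dissociation_set :: "'a set \<Rightarrow> ('a \<Rightarrow> 'a \<Rightarrow> bool) \<Rightarrow> 'a set \<Rightarrow> bool" where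
  "dissociation_set V E I \<longleftrightarrow> I \<subseteq> V \<and> (\<forall>x\<in>I. card {y\<in>I. E x y} \<le> 1)"

definition edges :: "'a set \<Rightarrow> ('a \<Rightarrow> 'a \<Rightarrow> bool) \<Rightarrow> 'a set set" where
  "edges V E = {{x, y} | x y. x \<in> V \<and> y \<in> V \<and> E x y}"

definition induced_matching :: "'a set \<Rightarrow> ('a \<Rightarrow> 'a \<Rightarrow> bool) \<Rightarrow> 'a set set \<Rightarrow> bool" where
  "induced_matching V E N \<longleftrightarrow> N \<subseteq> edges V E
     \<and> (\<forall>e\<in>N. \<forall>f\<in>N. e \<noteq> f \<longrightarrow> e \<inter> f = {})
     \<and> (\<forall>x\<in>\<Union>N. \<forall>y\<in>\<Union>N. E x y \<longrightarrow> {x, y} \<in> N)"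

definition alpha :: "'a set \<Rightarrow> ('a \<Rightarrow> 'a \<Rightarrow> bool) \<Rightarrow> nat" where
  "alpha V E = Max {card I | I. independent_set V E I}"

definition diss :: "'a set \<Rightarrow> ('a \<Rightarrow> 'a \<Rightarrow> bool) \<Rightarrow> nat" where
  "diss V E = Max {card I | I. dissociation_set V E I}"

definition nu_s :: "'a set \<Rightarrow> ('a \<Rightarrow> 'a \<Rightarrow> bool) \<Rightarrow> nat" where
  "nu_s V E = Max {card N | N. induced_matching V E N}"

text \<open>The construction H. Vertices: Inl (Inl u) for u in V (the copy of V),
  Inl (Inr u) for u in V (the new vertex u'), Inr i for i < 2(k-1) (the set W).
  The k-1 disjoint edges on W are {2j, 2j+1}.\<close>
definition H_verts :: "'a set \<Rightarrow> nat \<Rightarrow> (('a + 'a) + nat) set" where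
  "H_verts V k = Inl ` Inl ` V \<union> Inl ` Inr ` V \<union> Inr ` {0..<2*(k-1)}"

fun H_adj0 :: "('a \<Rightarrow> 'a \<Rightarrow> bool) \<Rightarrow> ('a + 'a) + nat \<Rightarrow> ('a + 'a) + nat \<Rightarrow> bool" where
  "H_adj0 E (Inl (Inl u)) (Inl (Inl v)) = E u v"
| "H_adj0 E (Inl (Inl u)) (Inl (Inr v)) = (u = v)"
| "H_adj0 E (Inl (Inr u)) (Inl (Inl v)) = (u = v)"
| "H_adj0 E (Inl (Inr u)) (Inl (Inr v)) = False"
| "H_adj0 E (Inl (Inl u)) (Inr j) = True"
| "H_adj0 E (Inr i) (Inl (Inl v)) = True"
| "H_adj0 E (Inl (Inr u)) (Inr j) = False"
| "H_adj0 E (Inr i) (Inl (Inr v)) = False"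
| "H_adj0 E (Inr i) (Inr j) = (i \<noteq> j \<and> i div 2 = j div 2)"

definition H_adj :: "'a set \<Rightarrow> ('a \<Rightarrow> 'a \<Rightarrow> bool) \<Rightarrow> nat \<Rightarrow> ('a + 'a) + nat \<Rightarrow> ('a + 'a) + nat \<Rightarrow> bool" where
  "H_adj V E k x y \<longleftrightarrow> x \<in> H_verts V k \<and> y \<in> H_verts V k \<and> H_adj0 E x y"

end

theory Submission
  imports Defs
begin

text \<open>The vertices of H fall into n + (k - 1) blocks {u, u'} and {w_2j, w_2j+1}, each an
  edge of H; an independent set meets every block at most once, and V' together with one
  end of each W-edge attains this.
  A dissociation set containing a vertex of V has at most one vertex in W, so it has at
  most 2n + 1 \<le> n + 2(k - 1) vertices, which V' \<union> W attains. In an induced matching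
  with at least two edges, an edge touching W and an edge touching V would be joined
  by an edge of H; as every edge of H touches V or W, the matching lies either inside
  W, giving at most k - 1 edges, or entirely away from W, where one V-vertex per edge
  gives an independent set of G. Conversely an independent set S of G yields the induced
  matching {uu' : u \<in> S}. The last equivalence is arithmetic, as diss H - alpha H = k - 1.\<close>

lemma finite_card_image_of_subsets:
  assumes "finite S" "\<And>I. P I \<Longrightarrow> I \<subseteq> S"
  shows "finite {card I | I. P I}"
proof -
  have "{card I | I. P I} \<subseteq> card ` Pow S" using assms(2) by auto
  then show ?thesis using assms(1) by (simp add: finite_subset)
qed

lemma card_le_Max_card:
  assumes "finite S" "\<And>I. P I \<Longrightarrow> I \<subseteq> S" "P J"
  shows "card J \<le> Max {card I | I. P I}"
  using assms by (intro Max_ge finite_card_image_of_subsets) auto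

lemma Max_card_attained:
  assumes "finite S" "\<And>I. P I \<Longrightarrow> I \<subseteq> S" "P J"
  obtains I where "P I" "card I = Max {card I | I. P I}"
proof -
  have "Max {card I | I. P I} \<in> {card I | I. P I}"
    using assms by (intro Max_in finite_card_image_of_subsets) auto
  then show ?thesis using that by auto
qed

lemma card_le_alpha: "finite V \<Longrightarrow> independent_set V E I \<Longrightarrow> card I \<le> alpha V E"
  unfolding alpha_def by (rule card_le_Max_card) (auto simp: independent_set_def)

lemma alpha_attained:
  assumes "finite V"
  obtains I where "independent_set V E I" "card I = alpha V E"
  using Max_card_attained[of V "independent_set V E" "{}"] assms
  unfolding alpha_def independent_set_def by blast

lemma alpha_eqI:
  assumes "finite V" "independent_set V E I" "card I = c"
    and "\<And>J. independent_set V E J \<Longrightarrow> card J \<le> c"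
  shows "alpha V E = c"
  by (metis alpha_attained assms card_le_alpha le_antisym)

lemma card_le_diss: "finite V \<Longrightarrow> dissociation_set V E I \<Longrightarrow> card I \<le> diss V E"
  unfolding diss_def by (rule card_le_Max_card) (auto simp: dissociation_set_def)

lemma diss_attained:
  assumes "finite V"
  obtains I where "dissociation_set V E I" "card I = diss V E"
  using Max_card_attained[of V "dissociation_set V E" "{}"] assms
  unfolding diss_def dissociation_set_def by blast

lemma diss_eqI:
  assumes "finite V" "dissociation_set V E I" "card I = c"
    and "\<And>J. dissociation_set V E J \<Longrightarrow> card J \<le> c"
  shows "diss V E = c"
  by (metis diss_attained assms card_le_diss le_antisym)

lemma induced_matching_subset_Pow: "induced_matching V E N \<Longrightarrow> N \<subseteq> Pow V"
  unfolding induced_matching_def edges_def by blast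

lemma card_le_nu_s: "finite V \<Longrightarrow> induced_matching V E N \<Longrightarrow> card N \<le> nu_s V E"
  unfolding nu_s_def
  by (rule card_le_Max_card[of "Pow V"]) (auto dest: induced_matching_subset_Pow)

lemma nu_s_attained:
  assumes "finite V"
  obtains N where "induced_matching V E N" "card N = nu_s V E"
proof (rule Max_card_attained[of "Pow V" "induced_matching V E" "{}"])
  show "finite (Pow V)" using assms by simp
  show "induced_matching V E {}" by (simp add: induced_matching_def)
  show "\<And>N. induced_matching V E N \<Longrightarrow> N \<subseteq> Pow V" by (rule induced_matching_subset_Pow)
qed (use that in \<open>simp add: nu_s_def\<close>)

lemma induced_matching_edgeE:
  assumes "induced_matching V E N" "e \<in> N"
  obtains x y where "e = {x, y}" "x \<in> V" "y \<in> V" "E x y"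
proof -
  have "e \<in> edges V E" using assms unfolding induced_matching_def by auto
  then have "\<exists>x y. e = {x, y} \<and> x \<in> V \<and> y \<in> V \<and> E x y" by (simp add: edges_def)
  then show ?thesis using that by metis
qed

lemma edges_memI: "x \<in> V \<Longrightarrow> y \<in> V \<Longrightarrow> E x y \<Longrightarrow> {x, y} \<in> edges V E"
  unfolding edges_def by blast

lemma induced_matching_common_vertex:
  assumes "induced_matching V E N" "e \<in> N" "f \<in> N" "z \<in> e" "z \<in> f"
  shows "e = f"
  using assms unfolding induced_matching_def by blast

lemma induced_matching_adjacent_same_edge:
  assumes M: "induced_matching V E N" and "e \<in> N" "f \<in> N" "x \<in> e" "y \<in> f" "E x y"
  shows "e = f"
proof -
  have "{x, y} \<in> N" using M assms(2-6) unfolding induced_matching_def by blast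
  then have "{x, y} = e" "{x, y} = f"
    using induced_matching_common_vertex[OF M] assms(2-5) by (metis insertI1 insert_commute)+
  then show ?thesis by simp
qed

lemma card_Union_induced_matching:
  assumes "finite V" "\<And>x. \<not> E x x" "induced_matching V E N"
  shows "card (\<Union>N) = 2 * card N"
proof -
  have card_edge: "card e = 2" if e: "e \<in> N" for e
  proof -
    obtain x y where "e = {x, y}" "E x y" using induced_matching_edgeE[OF assms(3) e] by blast
    moreover have "x \<noteq> y" using \<open>E x y\<close> assms(2) by blast
    ultimately show ?thesis by simp
  qed
  have "pairwise disjnt N"
    using assms(3) unfolding induced_matching_def pairwise_def disjnt_def by simp
  moreover have "finite e" if "e \<in> N" for e
    using card_edge[OF that] by (metis card.infinite zero_neq_numeral)
  ultimately have "card (\<Union>N) = sum card N" by (rule card_Union_disjoint)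
  also have "\<dots> = 2 * card N" using card_edge by simp
  finally show ?thesis .
qed

lemma H_verts_simps [simp]:
  "Inl (Inl u) \<in> H_verts V k \<longleftrightarrow> u \<in> V"
  "Inl (Inr u) \<in> H_verts V k \<longleftrightarrow> u \<in> V"
  "Inr i \<in> H_verts V k \<longleftrightarrow> i < 2 * (k - 1)"
  by (auto simp: H_verts_def)

lemma H_vertex_cases:
  obtains u where "x = Inl (Inl u)" | u where "x = Inl (Inr u)" | i where "x = Inr i"
  by (metis sum.exhaust)

lemma finite_H_verts: "finite V \<Longrightarrow> finite (H_verts V k)"
  by (simp add: H_verts_def)

lemma H_adj_irrefl: "(\<And>x. \<not> E x x) \<Longrightarrow> \<not> H_adj V E k x x"
  by (cases x rule: H_vertex_cases) (auto simp: H_adj_def)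

lemma H_adj_copy_iff:
  "H_adj V E k (Inl (Inr u)) y \<longleftrightarrow> u \<in> V \<and> y = Inl (Inl u)"
  "H_adj V E k y (Inl (Inr u)) \<longleftrightarrow> u \<in> V \<and> y = Inl (Inl u)"
  by (cases y rule: H_vertex_cases; auto simp: H_adj_def)
    (cases y rule: H_vertex_cases; auto simp: H_adj_def)

lemma H_adj_V_W: "u \<in> V \<Longrightarrow> i < 2 * (k - 1) \<Longrightarrow> H_adj V E k (Inl (Inl u)) (Inr i)"
  by (simp add: H_adj_def)

lemma H_adj_W_iff: "H_adj V E k (Inr i) (Inr j) \<longleftrightarrow>
    i < 2 * (k - 1) \<and> j < 2 * (k - 1) \<and> i \<noteq> j \<and> i div 2 = j div 2"
  by (simp add: H_adj_def)

lemma H_adj_meets_V_or_W: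
  "H_adj V E k x y \<Longrightarrow> (\<exists>u. Inl (Inl u) \<in> {x, y}) \<or> (\<exists>i. Inr i \<in> {x, y})"
  by (cases x rule: H_vertex_cases) (auto simp: H_adj_copy_iff)

definition W_edge :: "nat \<Rightarrow> (('a + 'a) + nat) set" where
  "W_edge q = {Inr (2 * q), Inr (2 * q + 1)}"

lemma mem_W_edge: "x \<in> W_edge q \<longleftrightarrow> (\<exists>i. x = Inr i \<and> i div 2 = q)"
  unfolding W_edge_def by auto

lemma W_edge_eq: "i \<noteq> j \<Longrightarrow> i div 2 = j div 2 \<Longrightarrow> W_edge (i div 2) = {Inr i, Inr j}"
  unfolding mem_W_edge set_eq_iff by auto

section \<open>Independence number of H\<close>

fun H_block :: "('a + 'a) + nat \<Rightarrow> 'a + nat" where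
  "H_block (Inl (Inl u)) = Inl u"
| "H_block (Inl (Inr u)) = Inl u"
| "H_block (Inr i) = Inr (i div 2)"

lemma H_adj_same_block:
  assumes "x \<in> H_verts V k" "y \<in> H_verts V k" "x \<noteq> y" "H_block x = H_block y"
  shows "H_adj V E k x y"
  using assms by (cases x rule: H_vertex_cases; cases y rule: H_vertex_cases) (auto simp: H_adj_def)

lemma H_block_image: "H_block ` H_verts V k \<subseteq> Inl ` V \<union> Inr ` {..<k - 1}"
  by (auto simp: H_verts_def less_mult_imp_div_less)

lemma card_independent_H_le:
  assumes "finite V" "independent_set (H_verts V k) (H_adj V E k) I"
  shows "card I \<le> card V + (k - 1)"
proof -
  have I: "I \<subseteq> H_verts V k" "\<forall>x\<in>I. \<forall>y\<in>I. \<not> H_adj V E k x y"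
    using assms(2) unfolding independent_set_def by auto
  have "inj_on H_block I"
    using I by (intro inj_onI) (metis H_adj_same_block subsetD)
  then have "card I = card (H_block ` I)" by (simp add: card_image)
  also have "\<dots> \<le> card (Inl ` V \<union> Inr ` {..<k - 1} :: ('a + nat) set)"
    using H_block_image[of V k] I(1) assms(1) by (intro card_mono) auto
  also have "\<dots> \<le> card V + (k - 1)"
    by (rule order_trans[OF card_Un_le]) (simp add: card_image)
  finally show ?thesis .
qed

lemma independent_H_witness:
  assumes "finite V"
  obtains I where "independent_set (H_verts V k) (H_adj V E k) I" "card I = card V + (k - 1)"
proof
  let ?J = "Inl ` Inr ` V \<union> (\<lambda>j. Inr (2 * j)) ` {..<k - 1} :: (('a + 'a) + nat) set"
  show "independent_set (H_verts V k) (H_adj V E k) ?J"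
    unfolding independent_set_def H_adj_def by auto
  have "inj_on (\<lambda>j. Inr (2 * j) :: ('a + 'a) + nat) {..<k - 1}" by (auto simp: inj_on_def)
  then show "card ?J = card V + (k - 1)"
    using assms by (subst card_Un_disjoint) (auto simp: card_image)
qed

lemma alpha_H:
  assumes "finite V"
  shows "alpha (H_verts V k) (H_adj V E k) = card V + (k - 1)"
  using independent_H_witness[OF assms] card_independent_H_le[OF assms]
  by (metis alpha_eqI assms finite_H_verts)

section \<open>Dissociation number of H\<close>

lemma card_dissociation_H_le:
  assumes "finite V" "card V < 2 * (k - 1)"
    and D: "dissociation_set (H_verts V k) (H_adj V E k) I"
  shows "card I \<le> card V + 2 * (k - 1)"
proof -
  let ?A = "Inl ` Inl ` V :: (('a + 'a) + nat) set"
  let ?B = "Inl ` Inr ` V :: (('a + 'a) + nat) set"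
  let ?W = "Inr ` {..<2 * (k - 1)} :: (('a + 'a) + nat) set"
  have cards: "card ?A = card V" "card ?B = card V" "card ?W = 2 * (k - 1)"
    by (simp_all add: card_image)
  have I: "I \<subseteq> ?A \<union> ?B \<union> ?W"
    using D unfolding dissociation_set_def by (auto simp: H_verts_def)
  have "finite I" using finite_subset[OF I] assms(1) by simp
  show ?thesis
  proof (cases "\<exists>u. Inl (Inl u) \<in> I")
    case True
    then obtain u where u: "Inl (Inl u) \<in> I" by blast
    have "I \<inter> ?W \<subseteq> {y \<in> I. H_adj V E k (Inl (Inl u)) y}"
      using u D by (auto simp: dissociation_set_def H_adj_V_W)
    then have "card (I \<inter> ?W) \<le> card {y \<in> I. H_adj V E k (Inl (Inl u)) y}"
      using \<open>finite I\<close> by (intro card_mono) auto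
    also have "\<dots> \<le> 1" using D u unfolding dissociation_set_def by blast
    finally have "card (I \<inter> ?W) \<le> 1" .
    moreover have "card I \<le> card ?A + card ?B + card (I \<inter> ?W)"
    proof -
      have "card I \<le> card (?A \<union> ?B \<union> (I \<inter> ?W))"
        using I assms(1) by (intro card_mono) auto
      also have "\<dots> \<le> card ?A + card ?B + card (I \<inter> ?W)"
        by (meson add_right_mono card_Un_le le_trans)
      finally show ?thesis .
    qed
    ultimately show ?thesis using cards assms(2) by linarith
  next
    case False
    then have "I \<subseteq> ?B \<union> ?W" using I by auto
    then have "card I \<le> card (?B \<union> ?W)" using assms(1) by (intro card_mono) auto
    then show ?thesis using card_Un_le[of ?B ?W] cards by linarith
  qed
qed

lemma dissociation_H_witness:
  assumes "finite V"
  obtains I where "dissociation_set (H_verts V k) (H_adj V E k) I"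
    "card I = card V + 2 * (k - 1)"
proof
  let ?D = "Inl ` Inr ` V \<union> Inr ` {..<2 * (k - 1)} :: (('a + 'a) + nat) set"
  have "card {y \<in> ?D. H_adj V E k x y} \<le> 1" if "x \<in> ?D" for x
  proof (cases x rule: H_vertex_cases)
    case (3 i)
    have unique: "y = y'" if nbrs: "y \<in> {y \<in> ?D. H_adj V E k x y}" "y' \<in> {y \<in> ?D. H_adj V E k x y}"
      for y y'
    proof -
      obtain j j' where j: "y = Inr j" "y' = Inr j'" "i \<noteq> j" "i \<noteq> j'"
        "i div 2 = j div 2" "i div 2 = j' div 2"
        using nbrs 3 by (auto simp: H_adj_W_iff H_adj_copy_iff)
      have "(W_edge (i div 2) :: (('a + 'a) + nat) set) = {Inr i, Inr j}"
        using j(3,5) by (rule W_edge_eq)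
      moreover have "(W_edge (i div 2) :: (('a + 'a) + nat) set) = {Inr i, Inr j'}"
        using j(4,6) by (rule W_edge_eq)
      ultimately show ?thesis using j by (auto simp: doubleton_eq_iff)
    qed
    have "finite {y \<in> ?D. H_adj V E k x y}" using assms by simp
    then have "card {y \<in> ?D. H_adj V E k x y} \<le> Suc 0"
      using unique by (simp only: card_le_Suc0_iff_eq) blast
    then show ?thesis by simp
  next
    case (2 u)
    then have "{y \<in> ?D. H_adj V E k x y} = {}" by (auto simp: H_adj_copy_iff)
    then show ?thesis by (metis card.empty zero_le_one)
  qed (use that in auto)
  then show "dissociation_set (H_verts V k) (H_adj V E k) ?D"
    unfolding dissociation_set_def by auto
  show "card ?D = card V + 2 * (k - 1)"
    using assms by (subst card_Un_disjoint) (auto simp: card_image)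
qed

lemma diss_H:
  assumes "finite V" "card V < 2 * (k - 1)"
  shows "diss (H_verts V k) (H_adj V E k) = card V + 2 * (k - 1)"
  using dissociation_H_witness[OF assms(1)] card_dissociation_H_le[OF assms]
  by (metis diss_eqI assms(1) finite_H_verts)

section \<open>Induced matchings of H\<close>

lemma induced_matching_H_W_edges:
  "induced_matching (H_verts V k) (H_adj V E k) (W_edge ` {..<k - 1})"
  unfolding induced_matching_def
proof (intro conjI ballI impI)
  show "W_edge ` {..<k - 1} \<subseteq> edges (H_verts V k) (H_adj V E k)"
    by (auto simp: W_edge_def H_adj_W_iff intro!: edges_memI)
  show "e \<inter> f = {}" if "e \<in> W_edge ` {..<k - 1}" "f \<in> W_edge ` {..<k - 1}" "e \<noteq> f" for e f
    using that by (auto simp: mem_W_edge)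
  fix x y assume "x \<in> \<Union>(W_edge ` {..<k - 1})" "y \<in> \<Union>(W_edge ` {..<k - 1})"
    and adj: "H_adj V E k x y"
  then obtain i j where "x = Inr i" "y = Inr j" "i div 2 < k - 1" by (auto simp: mem_W_edge)
  then show "{x, y} \<in> W_edge ` {..<k - 1}"
    using adj W_edge_eq[of i j] by (auto simp: H_adj_W_iff)
qed

lemma card_W_edges: "card (W_edge ` {..<k - 1}) = k - 1"
proof -
  have "inj (W_edge :: nat \<Rightarrow> (('a + 'a) + nat) set)" by (rule injI) (auto simp: W_edge_def doubleton_eq_iff)
  then show ?thesis by (metis card_image card_lessThan inj_on_subset subset_UNIV)
qed

definition copy_edge :: "'a \<Rightarrow> (('a + 'a) + nat) set" where
  "copy_edge u = {Inl (Inl u), Inl (Inr u)}"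

lemma induced_matching_H_copy_edges:
  assumes "independent_set V E S"
  shows "induced_matching (H_verts V k) (H_adj V E k) (copy_edge ` S)"
proof -
  have S: "S \<subseteq> V" "\<forall>u\<in>S. \<forall>v\<in>S. \<not> E u v" using assms unfolding independent_set_def by auto
  show ?thesis
    unfolding induced_matching_def
  proof (intro conjI ballI impI)
    show "copy_edge ` S \<subseteq> edges (H_verts V k) (H_adj V E k)"
      using S(1) by (auto simp: copy_edge_def H_adj_def intro!: edges_memI)
    show "e \<inter> f = {}" if "e \<in> copy_edge ` S" "f \<in> copy_edge ` S" "e \<noteq> f" for e f
      using that by (auto simp: copy_edge_def)
    show "{x, y} \<in> copy_edge ` S"
      if "x \<in> \<Union>(copy_edge ` S)" "y \<in> \<Union>(copy_edge ` S)" "H_adj V E k x y" for x y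
      using that S by (auto simp: copy_edge_def H_adj_def insert_commute)
  qed
qed

lemma card_copy_edges: "card (copy_edge ` S) = card S"
  by (rule card_image, rule inj_onI) (auto simp: copy_edge_def doubleton_eq_iff)

lemma induced_matching_H_inside_or_away_from_W:
  assumes M: "induced_matching (H_verts V k) (H_adj V E k) N" and "2 \<le> card N"
  shows "(\<forall>e\<in>N. e \<subseteq> range Inr) \<or> (\<forall>e\<in>N. e \<inter> range Inr = {})"
proof (rule ccontr)
  assume "\<not> ?thesis"
  then obtain e f i z where ef: "e \<in> N" "f \<in> N" "Inr i \<in> e" "z \<in> f" "z \<notin> range Inr"
    by blast
  have V_W: "g = g'" if "g \<in> N" "g' \<in> N" "Inl (Inl u) \<in> g" "Inr j \<in> g'" for g g' u j
  proof -
    have "g \<subseteq> H_verts V k" "g' \<subseteq> H_verts V k" using induced_matching_subset_Pow[OF M] that by auto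
    then have "u \<in> V" "j < 2 * (k - 1)" using that(3,4) by auto
    then have "H_adj V E k (Inl (Inl u)) (Inr j)" by (rule H_adj_V_W)
    then show ?thesis by (rule induced_matching_adjacent_same_edge[OF M that])
  qed
  have "\<exists>u. Inl (Inl u) \<in> f"
  proof (cases z rule: H_vertex_cases)
    case (2 u)
    obtain x y where "f = {x, y}" "H_adj V E k x y"
      using induced_matching_edgeE[OF M ef(2)] by blast
    then show ?thesis using 2 ef(4) by (auto simp: H_adj_copy_iff)
  qed (use ef in auto)
  then obtain u where u: "Inl (Inl u) \<in> e" using V_W[OF ef(2,1) _ ef(3)] by blast
  have "N \<noteq> {e}" using assms(2) by auto
  then obtain g where g: "g \<in> N" "g \<noteq> e" using ef(1) by blast
  obtain x y where "g = {x, y}" "H_adj V E k x y"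
    using induced_matching_edgeE[OF M g(1)] by blast
  then have "(\<exists>v. Inl (Inl v) \<in> g) \<or> (\<exists>j. Inr j \<in> g)"
    using H_adj_meets_V_or_W by blast
  then show False
  proof
    assume "\<exists>v. Inl (Inl v) \<in> g"
    then obtain v where "Inl (Inl v) \<in> g" ..
    then show False using V_W[OF g(1) ef(1) _ ef(3)] g(2) by simp
  next
    assume "\<exists>j. Inr j \<in> g"
    then obtain j where "Inr j \<in> g" ..
    then show False using V_W[OF ef(1) g(1) u] g(2) by simp
  qed
qed

lemma card_induced_matching_H_inside_W:
  assumes "\<And>x. \<not> E x x" "finite V" and M: "induced_matching (H_verts V k) (H_adj V E k) N"
    and "\<forall>e\<in>N. e \<subseteq> range Inr"
  shows "card N \<le> k - 1"
proof -
  have "\<Union>N \<subseteq> Inr ` {..<2 * (k - 1)}"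
    using assms(4) induced_matching_subset_Pow[OF M] by (fastforce simp: H_verts_def)
  then have "card (\<Union>N) \<le> card (Inr ` {..<2 * (k - 1)} :: (('a + 'a) + nat) set)"
    by (intro card_mono) simp_all
  also have "\<dots> = 2 * (k - 1)" by (simp add: card_image)
  finally have "card (\<Union>N) \<le> 2 * (k - 1)" .
  moreover have "card (\<Union>N) = 2 * card N"
    using card_Union_induced_matching[OF finite_H_verts[OF assms(2)] H_adj_irrefl M] assms(1) .
  ultimately show ?thesis by simp
qed

lemma independent_of_induced_matching_H_away_from_W:
  assumes "\<And>x. \<not> E x x" and M: "induced_matching (H_verts V k) (H_adj V E k) N"
    and "\<forall>e\<in>N. e \<inter> range Inr = {}"
  obtains S where "independent_set V E S" "card S = card N"
proof -
  have "\<forall>e\<in>N. \<exists>u. Inl (Inl u) \<in> e"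
  proof
    fix e assume e: "e \<in> N"
    obtain x y where xy: "e = {x, y}" "H_adj V E k x y"
      using induced_matching_edgeE[OF M e] by blast
    have "\<forall>i. Inr i \<notin> e" using assms(3) e by blast
    then show "\<exists>u. Inl (Inl u) \<in> e" using H_adj_meets_V_or_W[OF xy(2)] xy(1) by simp
  qed
  then obtain r where r: "\<forall>e\<in>N. Inl (Inl (r e)) \<in> e" by (rule bchoice[THEN exE])
  have rV: "r e \<in> V" if "e \<in> N" for e
    using induced_matching_subset_Pow[OF M] r that H_verts_simps(1)[of "r e" V k] by blast
  have "inj_on r N"
  proof (rule inj_onI)
    fix e f assume "e \<in> N" "f \<in> N" "r e = r f"
    then show "e = f" using induced_matching_common_vertex[OF M, of e f "Inl (Inl (r e))"] r by metis
  qed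
  moreover have "\<not> E (r e) (r f)" if ef: "e \<in> N" "f \<in> N" for e f
  proof
    assume adj: "E (r e) (r f)"
    then have "H_adj V E k (Inl (Inl (r e))) (Inl (Inl (r f)))" using rV ef by (simp add: H_adj_def)
    with ef r have "e = f" by (intro induced_matching_adjacent_same_edge[OF M]) simp_all
    then show False using adj assms(1) by simp
  qed
  ultimately show ?thesis
    using that[of "r ` N"] rV by (auto simp: independent_set_def card_image)
qed

lemma nu_s_H_ge: "finite V \<Longrightarrow> k - 1 \<le> nu_s (H_verts V k) (H_adj V E k)"
  using card_le_nu_s[OF finite_H_verts induced_matching_H_W_edges] card_W_edges by metis

lemma alpha_le_nu_s_H:
  assumes "finite V"
  shows "alpha V E \<le> nu_s (H_verts V k) (H_adj V E k)"
proof -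
  obtain S where "independent_set V E S" "card S = alpha V E"
    using alpha_attained[OF assms] .
  then show ?thesis
    using card_le_nu_s[OF finite_H_verts[OF assms] induced_matching_H_copy_edges] card_copy_edges
    by metis
qed

lemma nu_s_H_le_alpha:
  assumes "\<And>x. \<not> E x x" "finite V"
    and "k - 1 < nu_s (H_verts V k) (H_adj V E k)" "2 \<le> nu_s (H_verts V k) (H_adj V E k)"
  shows "nu_s (H_verts V k) (H_adj V E k) \<le> alpha V E"
proof -
  obtain N where N: "induced_matching (H_verts V k) (H_adj V E k) N"
    "card N = nu_s (H_verts V k) (H_adj V E k)" using nu_s_attained[OF finite_H_verts[OF assms(2)]] .
  have "\<not> (\<forall>e\<in>N. e \<subseteq> range Inr)"
    using card_induced_matching_H_inside_W[OF assms(1,2) N(1)] N(2) assms(3) by linarith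
  moreover have "2 \<le> card N" using N(2) assms(4) by simp
  ultimately have "\<forall>e\<in>N. e \<inter> range Inr = {}"
    using induced_matching_H_inside_or_away_from_W[OF N(1)] by blast
  then obtain S where "independent_set V E S" "card S = card N"
    using independent_of_induced_matching_H_away_from_W[OF assms(1) N(1)] by blast
  then show ?thesis using card_le_alpha[OF assms(2)] N(2) by metis
qed

theorem mainTheorem10:
  fixes V :: "'a set" and E :: "'a \<Rightarrow> 'a \<Rightarrow> bool" and k :: nat
  assumes "simple_graph V E"
    and "2 \<le> card V" and "card V < 2 * (k - 1)"
  shows "alpha (H_verts V k) (H_adj V E k) = card V + k - 1
    \<and> diss (H_verts V k) (H_adj V E k) = card V + 2 * (k - 1)
    \<and> k - 1 \<le> nu_s (H_verts V k) (H_adj V E k)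
    \<and> (k \<le> alpha V E \<longleftrightarrow> k \<le> nu_s (H_verts V k) (H_adj V E k))
    \<and> (k \<le> nu_s (H_verts V k) (H_adj V E k) \<longleftrightarrow>
         diss (H_verts V k) (H_adj V E k) \<noteq>
           alpha (H_verts V k) (H_adj V E k) + nu_s (H_verts V k) (H_adj V E k))"
proof -
  have finite: "finite V" and irrefl: "\<And>x. \<not> E x x"
    using assms(1) unfolding simple_graph_def by auto
  have "k \<ge> 3" using assms(2,3) by linarith
  have "k \<le> alpha V E \<longleftrightarrow> k \<le> nu_s (H_verts V k) (H_adj V E k)"
  proof
    show "k \<le> nu_s (H_verts V k) (H_adj V E k)" if "k \<le> alpha V E"
      using that alpha_le_nu_s_H[OF finite, of E k] by linarith
  next
    assume nu: "k \<le> nu_s (H_verts V k) (H_adj V E k)"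
    have "nu_s (H_verts V k) (H_adj V E k) \<le> alpha V E"
      by (rule nu_s_H_le_alpha[of E V k, OF irrefl finite]) (use nu \<open>k \<ge> 3\<close> in linarith)+
    with nu show "k \<le> alpha V E" by linarith
  qed
  moreover have "k - 1 \<le> nu_s (H_verts V k) (H_adj V E k)" using nu_s_H_ge[OF finite] .
  moreover have "alpha (H_verts V k) (H_adj V E k) = card V + (k - 1)" using alpha_H[OF finite] .
  moreover have "diss (H_verts V k) (H_adj V E k) = card V + 2 * (k - 1)"
    using diss_H[OF finite assms(3)] .
  ultimately show ?thesis using \<open>k \<ge> 3\<close> by auto
qed

end
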